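(* Let $G$ be an additive group, let $X$ be a complete non-Archimedean normed space over a field $K$ with a non-trivial non-Archimedean valuation $|\cdot|$, and let $k$ be a fixed integer with $k\neq 0,\pm1$. For $f:G\to X$ put $$Df(x,y)=f(x+ky)+f(x-ky)-k^2f(x+y)-k^2f(x-y)-2(1-k^2)f(x).$$ Let $\varphi:G\times G\to[0,\infty)$, and for $u\in G$ write $$\Phi(u)=\max\{|2(k^2-1)|\varphi(u,u),\ |k^2|\varphi(2u,u),\ \varphi(u,2u),\ \varphi((k+1)u,u),\ \varphi((k-1)u,u),\ \varphi(u,u),\ |k^2|\varphi(2u,2u),\ |2(k^2-1)|\varphi(u,2u),\ \varphi(u,3u),\ \varphi((2k+1)u,u),\ \varphi((2k-1)u,u)\}.$$ Suppose that $$\lim_{n\to\infty}\frac{1}{|2^n|}\max\{\varphi(2^{n+1}x,2^{n+1}y),\ |8|\varphi(2^nx,2^ny)\}=0,\qquad \lim_{n\to\infty}\frac{1}{|2^nk^2(k^2-1)|}\Phi(2^{n-1}x)=0$$ for all $x,y\in G$, and that for each $x\in G$ the limit $$\tilde{\varphi}_A(x):=\lim_{n\to\infty}\max\Big\{\frac{1}{|2^i|}\Phi(2^{i-1}x):\ 0\le i<n\Big\}$$ exists. Suppose that $f:G\to X$ is an odd function satisfying $\|Df(x,y)\|\le\varphi(x,y)$ for all $x,y\in G$. Then there exists an additive function $A:G\to X$ such that $$\|f(2x)-8f(x)-A(x)\|\le\frac{1}{|2k^2(k^2-1)|}\tilde{\varphi}_A(x)\qquad(x\in G).$$ Moreover,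 if $$\lim_{i\to\infty}\lim_{n\to\infty}\max\Big\{\frac{1}{|2^j|}\Phi(2^{j-1}x):\ i\le j<n+i\Big\}=0,$$ then $A$ is the unique additive function satisfying this inequality.
   Context: A non-Archimedean norm satisfies $\|x\|=0\iff x=0$, $\|rx\|=|r|\|x\|$ and $\|x+y\|\le\max\{\|x\|,\|y\|\}$. In the proof, $g(x)=f(2x)-8f(x)$ and $A(x)=\lim_{n\to\infty}g(2^nx)/2^n$. *)

theory Defs
  imports Complex_Main
begin

definition gmul :: "int \<Rightarrow> 'g::ab_group_add \<Rightarrow> 'g" where
  "gmul n x = (if 0 \<le> n then (\<Sum>_<nat n. x) else - (\<Sum>_<nat (- n). x))"

definition nonarch_valuation :: "('k::field \<Rightarrow> real) \<Rightarrow> bool" where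
  "nonarch_valuation v \<longleftrightarrow>
     (\<forall>r. 0 \<le> v r) \<and> (\<forall>r. v r = 0 \<longleftrightarrow> r = 0) \<and>
     (\<forall>r s. v (r * s) = v r * v s) \<and>
     (\<forall>r s. v (r + s) \<le> max (v r) (v s))"

definition nontrivial_valuation :: "('k::field \<Rightarrow> real) \<Rightarrow> bool" where
  "nontrivial_valuation v \<longleftrightarrow> (\<exists>r. v r \<noteq> 0 \<and> v r \<noteq> 1)"

definition nonarch_norm ::
  "('k::field \<Rightarrow> real) \<Rightarrow> ('k \<Rightarrow> 'x::ab_group_add \<Rightarrow> 'x) \<Rightarrow> ('x \<Rightarrow> real) \<Rightarrow> bool" where
  "nonarch_norm v smul nrm \<longleftrightarrow>
     (\<forall>x. nrm x = 0 \<longleftrightarrow> x = 0) \<and>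
     (\<forall>r x. nrm (smul r x) = v r * nrm x) \<and>
     (\<forall>x y. nrm (x + y) \<le> max (nrm x) (nrm y))"

definition norm_complete :: "('x::ab_group_add \<Rightarrow> real) \<Rightarrow> bool" where
  "norm_complete nrm \<longleftrightarrow>
     (\<forall>s::nat \<Rightarrow> 'x. (\<forall>e>0. \<exists>N. \<forall>m\<ge>N. \<forall>n\<ge>N. nrm (s m - s n) < e) \<longrightarrow>
        (\<exists>l. (\<lambda>n. nrm (s n - l)) \<longlonglongrightarrow> 0))"

definition Dop ::
  "('k::field \<Rightarrow> 'x::ab_group_add \<Rightarrow> 'x) \<Rightarrow> int \<Rightarrow> ('g::ab_group_add \<Rightarrow> 'x) \<Rightarrow> 'g \<Rightarrow> 'g \<Rightarrow> 'x" where
  "Dop smul k f x y =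
     f (x + gmul k y) + f (x - gmul k y)
     - smul (of_int (k^2)) (f (x + y)) - smul (of_int (k^2)) (f (x - y))
     - smul (of_int (2 * (1 - k^2))) (f x)"

definition Phi ::
  "('k::field \<Rightarrow> real) \<Rightarrow> int \<Rightarrow> ('g::ab_group_add \<Rightarrow> 'g \<Rightarrow> real) \<Rightarrow> 'g \<Rightarrow> real" where
  "Phi v k \<phi> u = Max
     { v (of_int (2 * (k^2 - 1))) * \<phi> u u,
       v (of_int (k^2)) * \<phi> (gmul 2 u) u,
       \<phi> u (gmul 2 u),
       \<phi> (gmul (k + 1) u) u,
       \<phi> (gmul (k - 1) u) u,
       \<phi> u u,
       v (of_int (k^2)) * \<phi> (gmul 2 u) (gmul 2 u),
       v (of_int (2 * (k^2 - 1))) * \<phi> u (gmul 2 u),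
       \<phi> u (gmul 3 u),
       \<phi> (gmul (2 * k + 1) u) u,
       \<phi> (gmul (2 * k - 1) u) u }"

text \<open>The term \<Phi>(2^(i-1) x) / |2^i|  (for i = 0 the natural-number subtraction
  gives 2^0 = 1).\<close>
definition Phi_term ::
  "('k::field \<Rightarrow> real) \<Rightarrow> int \<Rightarrow> ('g::ab_group_add \<Rightarrow> 'g \<Rightarrow> real) \<Rightarrow> 'g \<Rightarrow> nat \<Rightarrow> real" where
  "Phi_term v k \<phi> x i = Phi v k \<phi> (gmul (2 ^ (i - 1)) x) / v ((2::'k) ^ i)"

definition additive_map :: "('g::ab_group_add \<Rightarrow> 'x::ab_group_add) \<Rightarrow> bool" where
  "additive_map A \<longleftrightarrow> (\<forall>x y. A (x + y) = A x + A y)"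

end

theory Submission
  imports Defs
begin

(* Put g(x) = f(2x) - 8 f(x), which removes the cubic part of f. A linear identity among values
   of D f at integer multiples of u gives |k^2 (k^2 - 1)| ||g(2u) - 2 g(u)|| <= Phi(u), so by the
   ultrametric inequality g(2^n x) / 2^n is Cauchy, and its limit A stays within the stated bound
   of g. A is odd, satisfies A(2x) = 2 A(x), and inherits D A = 0 from the first limit hypothesis.
   A second linear identity turns D A = 0 into Jensen's equation A(x + y) + A(x - y) = 2 A(x),
   and oddness makes A additive. Two additive maps within the bound differ at x by 2^-n times
   their difference at 2^n x, which is controlled by the tail maxima of Phi(2^(i-1) x) / |2^i|. *)

lemma gmul_nat: "gmul (int n) x = (\<Sum>_<n. x)"
  by (simp add: gmul_def)

lemma gmul_neg_nat: "gmul (- int n) x = - (\<Sum>_<n. x)"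
  by (cases "n = 0") (simp_all add: gmul_def)

lemma gmul_succ: "gmul (n + 1) x = gmul n x + x"
proof (cases "0 \<le> n")
  case True
  then obtain m where m: "n = int m"
    by (metis nonneg_int_cases)
  then have "n + 1 = int (Suc m)"
    by simp
  then show ?thesis
    using m by (simp only: gmul_nat) (simp add: add.commute)
next
  case False
  then obtain m where m: "n = - int (Suc m)"
    by (intro that[of "nat (- n - 1)"]) simp
  then have "n + 1 = - int m"
    by simp
  then show ?thesis
    using m by (simp only: gmul_neg_nat) (simp add: add.commute)
qed

lemma gmul_0 [simp]: "gmul 0 x = 0"
  by (simp add: gmul_def)

lemma gmul_1 [simp]: "gmul 1 x = x"
  by (simp add: gmul_def)

lemma gmul_add: "gmul (m + n) x = gmul m x + gmul n x"
proof (induction n rule: int_induct[where k = 0])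
  case (step1 i)
  then show ?case
    using gmul_succ[of "m + i" x] gmul_succ[of i x] by (simp add: add.assoc)
next
  case (step2 i)
  then show ?case
    using gmul_succ[of "m + (i - 1)" x] gmul_succ[of "i - 1" x] by (simp add: algebra_simps)
qed simp

lemma gmul_minus: "gmul (- n) x = - gmul n x"
  using gmul_add[of n "- n" x] by (simp add: eq_neg_iff_add_eq_0 add.commute)

lemma gmul_diff: "gmul (m - n) x = gmul m x - gmul n x"
  using gmul_add[of m "- n" x] by (simp add: gmul_minus)

lemma gmul_zero_right [simp]: "gmul n (0::'a::ab_group_add) = 0"
  by (simp add: gmul_def)

lemma gmul_add_right: "gmul n (x + y) = gmul n x + gmul n y"
  by (simp add: gmul_def sum.distrib)

lemma gmul_minus_right: "gmul n (- x) = - gmul n x"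
  using gmul_add_right[of n x "- x"] by (simp add: eq_neg_iff_add_eq_0 add.commute)

lemma gmul_diff_right: "gmul n (x - y) = gmul n x - gmul n y"
  using gmul_add_right[of n x "- y"] by (simp add: gmul_minus_right)

lemma gmul_mult: "gmul (m * n) x = gmul m (gmul n x)"
proof (induction m rule: int_induct[where k = 0])
  case (step1 i)
  then show ?case
    by (simp add: distrib_right gmul_add gmul_succ)
next
  case (step2 i)
  then show ?case
    by (simp add: left_diff_distrib gmul_diff)
qed simp

(* The point (a + a' k) x + (b + b' k) y is encoded by its coefficient tuple (a, a', b, b').
   Linear identities between values of a function at such points are proved by writing each
   value as a formal combination (lincomb) and comparing integer coefficients: syntactically
   distinct tuples are independent atoms, so no case analysis on coincidences for special k
   is needed. *)
definition kpoint :: "int \<Rightarrow> 'g::ab_group_add \<Rightarrow> 'g \<Rightarrow> int \<times> int \<times> int \<times> int \<Rightarrow> 'g" where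
  "kpoint k x y p = (case p of (a, a', b, b') \<Rightarrow> gmul (a + a' * k) x + gmul (b + b' * k) y)"

lemma kpoint_add_gmul:
  "kpoint k x y (a, a', b, b') + gmul s (kpoint k x y (c, 0, d, 0)) = kpoint k x y (a + s * c, a', b + s * d, b')"
  by (simp add: kpoint_def gmul_add_right gmul_mult[symmetric] gmul_add algebra_simps)

lemma kpoint_cong:
  "a + a' * k = c + c' * k \<Longrightarrow> b + b' * k = d + d' * k \<Longrightarrow> kpoint k x y (a, a', b, b') = kpoint k x y (c, c', d, d')"
  by (simp add: kpoint_def)

lemma kpoint_uminus: "kpoint k x y (- a, - a', - b, - b') = - kpoint k x y (a, a', b, b')"
  by (simp only: kpoint_def prod.case mult_minus_left minus_add_distrib[symmetric] gmul_minus)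

lemma kpoint_zero: "kpoint k x y (0, 0, 0, 0) = 0"
  by (simp add: kpoint_def)

lemma Dop_kpoint:
  "Dop smul k A (kpoint k x y (a, a', b, b')) (kpoint k x y (c, 0, d, 0)) =
     A (kpoint k x y (a, a' + c, b, b' + d)) + A (kpoint k x y (a, a' - c, b, b' - d))
     - smul (of_int (k^2)) (A (kpoint k x y (a + c, a', b + d, b')))
     - smul (of_int (k^2)) (A (kpoint k x y (a - c, a', b - d, b')))
     - smul (of_int (2 * (1 - k^2))) (A (kpoint k x y (a, a', b, b')))"
proof -
  have plus_k: "kpoint k x y (a, a', b, b') + gmul k (kpoint k x y (c, 0, d, 0)) = kpoint k x y (a, a' + c, b, b' + d)"
    unfolding kpoint_add_gmul by (rule kpoint_cong) (simp_all add: algebra_simps)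
  have "kpoint k x y (a, a', b, b') - gmul k (kpoint k x y (c, 0, d, 0)) = kpoint k x y (a + - k * c, a', b + - k * d, b')"
    using kpoint_add_gmul[of k x y a a' b b' "- k" c d] by (simp add: gmul_minus)
  also have "\<dots> = kpoint k x y (a, a' - c, b, b' - d)"
    by (rule kpoint_cong) (simp_all add: algebra_simps)
  finally have minus_k: "kpoint k x y (a, a', b, b') - gmul k (kpoint k x y (c, 0, d, 0)) = kpoint k x y (a, a' - c, b, b' - d)" .
  have plus_1: "kpoint k x y (a, a', b, b') + kpoint k x y (c, 0, d, 0) = kpoint k x y (a + c, a', b + d, b')"
    using kpoint_add_gmul[of k x y a a' b b' 1 c d] by simp
  have minus_1: "kpoint k x y (a, a', b, b') - kpoint k x y (c, 0, d, 0) = kpoint k x y (a - c, a', b - d, b')"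
    using kpoint_add_gmul[of k x y a a' b b' "- 1" c d] by (simp add: gmul_minus)
  show ?thesis
    unfolding Dop_def plus_k minus_k plus_1 minus_1 ..
qed

definition lincomb :: "('p \<Rightarrow> 'x::ab_group_add) \<Rightarrow> 'p list \<Rightarrow> ('p \<Rightarrow> int) \<Rightarrow> 'x" where
  "lincomb w ps c = (\<Sum>p\<leftarrow>ps. gmul (c p) (w p))"

lemma lincomb_add: "lincomb w ps c + lincomb w ps d = lincomb w ps (\<lambda>p. c p + d p)"
  by (induction ps) (simp_all add: lincomb_def gmul_add algebra_simps)

lemma lincomb_diff: "lincomb w ps c - lincomb w ps d = lincomb w ps (\<lambda>p. c p - d p)"
  by (induction ps) (simp_all add: lincomb_def gmul_diff algebra_simps)

lemma lincomb_minus: "- lincomb w ps c = lincomb w ps (\<lambda>p. - c p)"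
  by (induction ps) (simp_all add: lincomb_def gmul_minus)

lemma lincomb_gmul: "gmul m (lincomb w ps c) = lincomb w ps (\<lambda>p. m * c p)"
  by (induction ps) (simp_all add: lincomb_def gmul_add_right gmul_mult)

lemma lincomb_cong:
  assumes "\<And>p. p \<in> set ps \<Longrightarrow> c p = d p"
  shows "lincomb w ps c = lincomb w ps d"
  using assms by (induction ps) (simp_all add: lincomb_def)

lemma lincomb_single:
  assumes "distinct ps" "p \<in> set ps"
  shows "lincomb w ps (\<lambda>q. of_bool (q = p)) = w p"
proof -
  have "lincomb w ps (\<lambda>q. of_bool (q = p)) = (\<Sum>q\<in>set ps. if q = p then w q else 0)"
    unfolding lincomb_def sum_list_distinct_conv_sum_set[OF assms(1)] by (rule sum.cong) auto
  then show ?thesis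
    using assms(2) by simp
qed

lemma kpoint_atom:
  assumes "distinct ps" "p \<in> set ps"
  shows "A (kpoint k x y p) = lincomb (\<lambda>p. A (kpoint k x y p)) ps (\<lambda>q. of_bool (q = p))"
  using lincomb_single[OF assms, of "\<lambda>p. A (kpoint k x y p)"] by simp

lemma kpoint_atom_uminus:
  assumes "distinct ps" "(- a, - a', - b, - b') \<in> set ps" and odd: "\<And>z. A (- z) = - A z"
  shows "A (kpoint k x y (a, a', b, b')) =
           - lincomb (\<lambda>p. A (kpoint k x y p)) ps (\<lambda>q. of_bool (q = (- a, - a', - b, - b')))"
proof -
  have "kpoint k x y (a, a', b, b') = - kpoint k x y (- a, - a', - b, - b')"
    using kpoint_uminus[of k x y "- a" "- a'" "- b" "- b'"] by simp
  then show ?thesis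
    using kpoint_atom[OF assms(1,2)] odd by simp
qed

lemma kpoint_atom_zero: "A 0 = 0 \<Longrightarrow> p = (0, 0, 0, 0) \<Longrightarrow> A (kpoint k x y p) = 0"
  by (simp add: kpoint_zero)

context vector_space
begin

lemma scale_of_int: "scale (of_int m) z = gmul m z"
proof -
  have nat: "scale (of_nat n) z = (\<Sum>_<n. z)" for n
    by (induction n) (simp_all add: scale_left_distrib add.commute)
  show ?thesis
  proof (cases "0 \<le> m")
    case True
    then show ?thesis
      using nat[of "nat m"] by (simp add: gmul_def)
  next
    case False
    then have "scale (of_int m) z = - scale (of_nat (nat (- m))) z"
      by simp
    also have "\<dots> = gmul m z"
      by (simp only: nat gmul_def if_not_P[OF False])
    finally show ?thesis .
  qed
qed

lemma scale_numeral: "scale (numeral n) z = gmul (numeral n) z"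
  using scale_of_int[of "numeral n" z] by simp

lemma scale_two: "scale 2 z = z + z"
  using scale_left_distrib[of 1 1 z] by (simp add: one_add_one)

lemma Dop_identity_doubling:
  fixes k :: int and u :: "'g::ab_group_add"
  assumes odd: "\<And>z. A (- z) = - A z" and zero: "A 0 = 0"
  defines "P \<equiv> kpoint k u 0"
  shows "scale (of_int (k^2 * (k^2 - 1)))
           (A (P (4, 0, 0, 0)) - scale 10 (A (P (2, 0, 0, 0))) + scale 16 (A (P (1, 0, 0, 0)))) =
    scale (of_int (4 * k^2 - 3)) (Dop scale k A (P (1, 0, 0, 0)) (P (1, 0, 0, 0)))
    + scale (of_int (2 * k^2)) (Dop scale k A (P (1, 0, 0, 0)) (P (2, 0, 0, 0)))
    - scale (of_int (2 * k^2)) (Dop scale k A (P (2, 0, 0, 0)) (P (1, 0, 0, 0)))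
    - scale (of_int (k^2)) (Dop scale k A (P (2, 0, 0, 0)) (P (2, 0, 0, 0)))
    - scale 2 (Dop scale k A (P (1, 1, 0, 0)) (P (1, 0, 0, 0)))
    + scale 2 (Dop scale k A (P (-1, 1, 0, 0)) (P (1, 0, 0, 0)))
    + Dop scale k A (P (1, 0, 0, 0)) (P (3, 0, 0, 0))
    - Dop scale k A (P (1, 2, 0, 0)) (P (1, 0, 0, 0))
    + Dop scale k A (P (-1, 2, 0, 0)) (P (1, 0, 0, 0))"
proof -
  define ps :: "(int \<times> int \<times> int \<times> int) list" where
    "ps = [(1,0,0,0), (2,0,0,0), (3,0,0,0), (4,0,0,0), (1,1,0,0), (1,-1,0,0), (1,2,0,0), (1,-2,0,0),
           (2,1,0,0), (2,-1,0,0), (2,2,0,0), (2,-2,0,0), (0,1,0,0), (0,2,0,0), (1,3,0,0), (1,-3,0,0)]"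
  have dist: "distinct ps"
    by (simp add: ps_def)
  show ?thesis
    unfolding P_def Dop_kpoint scale_of_int scale_numeral
    by (simp add: kpoint_atom[OF dist] kpoint_atom_uminus[where A = A, OF dist _ odd] kpoint_atom_zero[where A = A, OF zero]
        ps_def lincomb_add lincomb_diff lincomb_minus lincomb_gmul)
      (rule lincomb_cong, auto simp: algebra_simps)
qed

(* Once D A = 0 and A (2 z) = 2 A z, the right-hand side vanishes and this becomes Jensen's equation. *)
lemma Dop_identity_jensen:
  fixes k :: int and x y :: "'g::ab_group_add"
  assumes odd: "\<And>z. A (- z) = - A z" and zero: "A 0 = 0"
  defines "P \<equiv> kpoint k x y"
  shows "scale (of_int (6 * k^2 * (k^2 - 1)))
           (A (P (1, 0, 1, 0)) + A (P (1, 0, -1, 0)) - scale 2 (A (P (1, 0, 0, 0)))) =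
    scale 4 (Dop scale k A (P (1, 0, 0, -1)) (P (1, 0, 0, 0)))
    + scale (of_int (6 - 8 * k^2)) (Dop scale k A (P (1, 0, 0, 0)) (P (0, 0, 1, 0)))
    - scale 4 (Dop scale k A (P (1, 0, 0, 0)) (P (1, 0, 1, 0)))
    - scale 4 (Dop scale k A (P (1, 0, 0, 0)) (P (1, 0, -1, 0)))
    + scale 4 (Dop scale k A (P (1, 0, 0, 1)) (P (1, 0, 0, 0)))
    + scale (of_int (k^2)) (Dop scale k A (P (2, 0, -1, 0)) (P (0, 0, 1, 0)))
    + Dop scale k A (P (2, 0, 0, -1)) (P (0, 0, 1, 0))
    + scale (of_int (2 * k^2 + 2)) (Dop scale k A (P (2, 0, 0, 0)) (P (0, 0, 1, 0)))
    + Dop scale k A (P (2, 0, 0, 1)) (P (0, 0, 1, 0))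
    + scale (of_int (k^2)) (Dop scale k A (P (2, 0, 1, 0)) (P (0, 0, 1, 0)))
    + scale (of_int (k^4)) (A (P (2, 0, -2, 0)) - scale 2 (A (P (1, 0, -1, 0))))
    - (A (P (2, 0, 0, -2)) - scale 2 (A (P (1, 0, 0, -1))))
    - scale (of_int (2 * k^4 - 2)) (A (P (2, 0, 0, 0)) - scale 2 (A (P (1, 0, 0, 0))))
    - (A (P (2, 0, 0, 2)) - scale 2 (A (P (1, 0, 0, 1))))
    + scale (of_int (k^4)) (A (P (2, 0, 2, 0)) - scale 2 (A (P (1, 0, 1, 0))))"
proof -
  define ps :: "(int \<times> int \<times> int \<times> int) list" where
    "ps = [(1,0,0,0), (1,0,1,0), (1,0,-1,0), (1,0,0,1), (1,0,0,-1), (1,1,0,1), (1,1,0,-1), (1,-1,0,1),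
           (1,-1,0,-1), (0,0,1,0), (0,0,0,1), (2,0,0,0), (2,0,1,0), (2,0,-1,0), (2,0,2,0), (2,0,-2,0),
           (2,0,0,1), (2,0,0,-1), (2,0,0,2), (2,0,0,-2), (2,0,1,1), (2,0,1,-1), (2,0,-1,1), (2,0,-1,-1)]"
  have dist: "distinct ps"
    by (simp add: ps_def)
  show ?thesis
    unfolding P_def Dop_kpoint scale_of_int scale_numeral
    by (simp add: kpoint_atom[OF dist] kpoint_atom_uminus[where A = A, OF dist _ odd] kpoint_atom_zero[where A = A, OF zero]
        ps_def lincomb_add lincomb_diff lincomb_minus lincomb_gmul)
      (rule lincomb_cong, auto simp: algebra_simps)
qed

lemma Dop_diff: "Dop scale k F p q - Dop scale k G p q = Dop scale k (\<lambda>z. F z - G z) p q"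
  by (simp add: Dop_def scale_right_diff_distrib algebra_simps)

lemma Dop_scale: "Dop scale k (\<lambda>z. scale c (G z)) p q = scale c (Dop scale k G p q)"
  by (simp add: Dop_def scale_right_diff_distrib scale_right_distrib mult.commute)

end

lemma Dop_comp_gmul: "Dop smul k (\<lambda>z. G (gmul m z)) p q = Dop smul k G (gmul m p) (gmul m q)"
proof -
  have "gmul m (gmul k q) = gmul k (gmul m q)"
    by (simp add: gmul_mult[symmetric] mult.commute)
  then show ?thesis
    by (simp add: Dop_def gmul_add_right gmul_diff_right)
qed

lemma additive_map_gmul:
  assumes "additive_map B"
  shows "B (gmul m x) = gmul m (B x)"
proof -
  have diff: "B (a - b) = B a - B b" for a b
    using assms[unfolded additive_map_def, rule_format, of "a - b" b] by simp
  show ?thesis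
  proof (induction m rule: int_induct[where k = 0])
    case base
    then show ?case
      using diff[of x x] by simp
  next
    case (step1 i)
    then show ?case
      using assms by (simp add: gmul_succ additive_map_def)
  next
    case (step2 i)
    then show ?case
      using diff[of "gmul i x" x] by (simp add: gmul_diff)
  qed
qed

lemma convergent_Max_window:
  fixes a :: "nat \<Rightarrow> real"
  assumes "convergent (\<lambda>n. Max (a ` {..<n}))"
  shows "convergent (\<lambda>m. Max (a ` {i..<m + i}))"
proof -
  define L where "L = lim (\<lambda>n. Max (a ` {..<n}))"
  have "incseq (\<lambda>n. Max (a ` {..<Suc n}))"
    by (rule incseq_SucI, rule Max_mono) auto
  moreover have "(\<lambda>n. Max (a ` {..<Suc n})) \<longlonglongrightarrow> L"
    using LIMSEQ_Suc assms by (simp add: L_def convergent_LIMSEQ_iff)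
  ultimately have bound: "Max (a ` {..<Suc n}) \<le> L" for n
    by (rule incseq_le)
  have "incseq (\<lambda>m. Max (a ` {i..<Suc m + i}))"
    by (rule incseq_SucI, rule Max_mono) auto
  moreover have "Max (a ` {i..<Suc m + i}) \<le> L" for m
  proof -
    have "Max (a ` {i..<Suc m + i}) \<le> Max (a ` {..<Suc (m + i)})"
      by (rule Max_mono) auto
    then show ?thesis
      using bound[of "m + i"] by linarith
  qed
  ultimately obtain l where "(\<lambda>m. Max (a ` {i..<Suc m + i})) \<longlonglongrightarrow> l"
    using incseq_convergent by blast
  then have "(\<lambda>m. Max (a ` {i..<m + i})) \<longlonglongrightarrow> l"
    by (intro LIMSEQ_imp_Suc[where f = "\<lambda>m. Max (a ` {i..<m + i})"]) simp
  then show ?thesis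
    by (rule convergentI)
qed

lemma le_of_le_max_tendsto:
  fixes c L :: real
  assumes "\<And>n. c \<le> max (a n) (b n)" "a \<longlonglongrightarrow> 0" "b \<longlonglongrightarrow> L" "0 \<le> L"
  shows "c \<le> L"
proof -
  have "(\<lambda>n. max (a n) (b n)) \<longlonglongrightarrow> max 0 L"
    by (rule tendsto_max[OF assms(2,3)])
  then show ?thesis
    using assms(1,4) by (intro LIMSEQ_le_const[where X="\<lambda>n. max (a n) (b n)"]) auto
qed

locale nonarch_banach = vector_space smul for smul :: "'k::field \<Rightarrow> 'x::ab_group_add \<Rightarrow> 'x" +
  fixes v :: "'k \<Rightarrow> real" and nrm :: "'x \<Rightarrow> real"
  assumes valuation: "nonarch_valuation v" and norm: "nonarch_norm v smul nrm"
    and complete: "norm_complete nrm" and two_nonzero: "(2::'k) \<noteq> 0"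
begin

lemma val_nonneg: "0 \<le> v r"
  using valuation by (simp add: nonarch_valuation_def)

lemma val_eq_0_iff [simp]: "v r = 0 \<longleftrightarrow> r = 0"
  using valuation by (simp add: nonarch_valuation_def)

lemma val_mult: "v (r * s) = v r * v s"
  using valuation by (simp add: nonarch_valuation_def)

lemma val_0 [simp]: "v 0 = 0"
  by simp

lemma val_add_le_max: "v (r + s) \<le> max (v r) (v s)"
  using valuation by (simp add: nonarch_valuation_def)

lemma val_pos: "r \<noteq> 0 \<Longrightarrow> 0 < v r"
  using val_nonneg[of r] by (simp add: order_less_le)

lemma val_1 [simp]: "v 1 = 1"
  using val_mult[of 1 1] by simp

lemma val_minus [simp]: "v (- r) = v r"
proof -
  have "v (-1) * v (-1) = 1"
    using val_mult[of "-1" "-1"] by simp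
  then have "(v (-1) - 1) * (v (-1) + 1) = 0"
    by (simp add: algebra_simps)
  then have "v (-1) = 1"
    using val_nonneg[of "-1"] by auto
  then show ?thesis
    using val_mult[of "-1" r] by simp
qed

lemma val_inverse: "v (inverse r) = inverse (v r)"
proof (cases "r = 0")
  case False
  then have "v r * v (inverse r) = 1"
    by (simp add: val_mult[symmetric])
  then show ?thesis
    by (simp add: inverse_unique)
qed simp

lemma val_of_nat_le_1: "v (of_nat n) \<le> 1"
proof (induction n)
  case (Suc n)
  then show ?case
    using val_add_le_max[of 1 "of_nat n"] by simp
qed simp

lemma val_of_int_le_1: "v (of_int n) \<le> 1"
proof (cases "0 \<le> n")
  case True
  then show ?thesis
    using val_of_nat_le_1[of "nat n"] by simp
next
  case False
  then have "of_int n = - (of_nat (nat (- n)) :: 'k)"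
    by simp
  then show ?thesis
    using val_of_nat_le_1[of "nat (- n)"] by simp
qed

lemma val_numeral_le_1: "v (numeral n) \<le> 1"
  using val_of_nat_le_1[of "numeral n"] by simp

lemma val_2_le_1: "v 2 \<le> 1"
  by (rule val_numeral_le_1)

lemma val_2_pos: "0 < v 2"
  using two_nonzero by (rule val_pos)

lemma val_pow2_pos: "0 < v ((2::'k) ^ n)"
  using two_nonzero by (simp add: val_pos)

lemma nrm_eq_0_iff [simp]: "nrm z = 0 \<longleftrightarrow> z = 0"
  using norm by (simp add: nonarch_norm_def)

lemma nrm_0 [simp]: "nrm 0 = 0"
  by simp

lemma nrm_scale: "nrm (smul r z) = v r * nrm z"
  using norm by (simp add: nonarch_norm_def)

lemma nrm_add_le_max: "nrm (a + b) \<le> max (nrm a) (nrm b)"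
  using norm by (simp add: nonarch_norm_def)

lemma nrm_minus [simp]: "nrm (- a) = nrm a"
  using nrm_scale[of "-1" a] by simp

lemma nrm_nonneg: "0 \<le> nrm a"
  using nrm_add_le_max[of a "- a"] by simp

lemma nrm_minus_commute: "nrm (a - b) = nrm (b - a)"
  using nrm_minus[of "a - b"] by simp

lemma nrm_add_le: "nrm a \<le> B \<Longrightarrow> nrm b \<le> B \<Longrightarrow> nrm (a + b) \<le> B"
  using nrm_add_le_max[of a b] by linarith

lemma nrm_add_less: "nrm a < B \<Longrightarrow> nrm b < B \<Longrightarrow> nrm (a + b) < B"
  using nrm_add_le_max[of a b] by linarith

lemma nrm_diff_le: "nrm a \<le> B \<Longrightarrow> nrm b \<le> B \<Longrightarrow> nrm (a - b) \<le> B"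
  using nrm_add_le[of a B "- b"] by simp

lemma nrm_triangle_max: "nrm (a - c) \<le> max (nrm (a - b)) (nrm (b - c))"
  using nrm_add_le_max[of "a - b" "b - c"] by simp

lemma nrm_scale_of_int_le: "nrm (smul (of_int m) z) \<le> nrm z"
  using val_of_int_le_1[of m] nrm_nonneg[of z] val_nonneg[of "of_int m"]
  by (simp add: nrm_scale mult_left_le_one_le)

lemma double_eq_0_imp: "(z::'x) + z = 0 \<Longrightarrow> z = 0"
  using two_nonzero by (simp add: scale_two[symmetric])

lemma tendsto_nrm_unique:
  assumes "(\<lambda>n. nrm (s n - a)) \<longlonglongrightarrow> 0" "(\<lambda>n. nrm (s n - b)) \<longlonglongrightarrow> 0"
  shows "a = b"
proof -
  have "nrm (a - b) \<le> max (nrm (s n - a)) (nrm (s n - b))" for n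
    using nrm_triangle_max[of a b "s n"] nrm_minus_commute[of a "s n"] by simp
  moreover have "(\<lambda>n. max (nrm (s n - a)) (nrm (s n - b))) \<longlonglongrightarrow> max 0 0"
    by (intro tendsto_max assms)
  ultimately have "nrm (a - b) \<le> 0"
    by (intro LIMSEQ_le_const) auto
  then show ?thesis
    using nrm_nonneg[of "a - b"] by simp
qed

lemma convergent_if_diff_Suc_tendsto_0:
  fixes s :: "nat \<Rightarrow> 'x"
  assumes "(\<lambda>i. nrm (s (Suc i) - s i)) \<longlonglongrightarrow> 0"
  shows "\<exists>l. (\<lambda>n. nrm (s n - l)) \<longlonglongrightarrow> 0"
proof -
  have "\<exists>N. \<forall>m\<ge>N. \<forall>n\<ge>N. nrm (s m - s n) < e" if e: "0 < e" for e
  proof -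
    obtain N where N: "\<forall>i\<ge>N. nrm (s (Suc i) - s i) < e"
      using LIMSEQ_D[OF assms e] nrm_nonneg by auto
    have shift: "nrm (s (n + d) - s n) < e" if "N \<le> n" for n d
    proof (induction d)
      case (Suc d)
      have "nrm (s (Suc (n + d)) - s (n + d)) < e"
        using N that by auto
      from nrm_add_less[OF this Suc.IH] show ?case
        by simp
    qed (simp add: e)
    have "nrm (s m - s n) < e" if "N \<le> m" "N \<le> n" for m n
    proof (cases "n \<le> m")
      case True
      then show ?thesis
        using shift[OF that(2), of "m - n"] by simp
    next
      case False
      then show ?thesis
        using shift[OF that(1), of "n - m"] nrm_minus_commute[of "s m" "s n"] by simp
    qed
    then show ?thesis by blast
  qed
  then show ?thesis
    using complete by (simp add: norm_complete_def)
qed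

lemma nrm_Dop_le:
  "nrm (Dop smul k G p q) \<le> max (max (nrm (G (p + gmul k q))) (nrm (G (p - gmul k q))))
     (max (max (nrm (G (p + q))) (nrm (G (p - q)))) (nrm (G p)))"
  unfolding Dop_def by (intro nrm_diff_le nrm_add_le order_trans[OF nrm_scale_of_int_le]) auto

lemma tendsto_nrm_Dop:
  assumes "\<And>z. (\<lambda>n. nrm (F n z - G z)) \<longlonglongrightarrow> 0"
  shows "(\<lambda>n. nrm (Dop smul k (F n) p q - Dop smul k G p q)) \<longlonglongrightarrow> 0"
proof (rule tendsto_sandwich[OF _ _ tendsto_const])
  let ?d = "\<lambda>n z. nrm (F n z - G z)"
  show "\<forall>\<^sub>F n in sequentially. 0 \<le> nrm (Dop smul k (F n) p q - Dop smul k G p q)"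
    by (simp add: nrm_nonneg)
  show "\<forall>\<^sub>F n in sequentially. nrm (Dop smul k (F n) p q - Dop smul k G p q) \<le>
      max (max (?d n (p + gmul k q)) (?d n (p - gmul k q))) (max (max (?d n (p + q)) (?d n (p - q))) (?d n p))"
    using nrm_Dop_le[of k "\<lambda>z. F _ z - G z" p q] by (simp add: Dop_diff)
  show "(\<lambda>n. max (max (?d n (p + gmul k q)) (?d n (p - gmul k q))) (max (max (?d n (p + q)) (?d n (p - q))) (?d n p))) \<longlonglongrightarrow> 0"
    using tendsto_max[OF tendsto_max[OF assms assms] tendsto_max[OF tendsto_max[OF assms assms] assms]] by simp
qed

end

locale additive_cubic_stability = nonarch_banach smul v nrm
  for smul :: "'k::field \<Rightarrow> 'x::ab_group_add \<Rightarrow> 'x" and v nrm +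
  fixes k :: int and \<phi> :: "'g::ab_group_add \<Rightarrow> 'g \<Rightarrow> real" and f :: "'g \<Rightarrow> 'x"
  assumes k_nonzero: "(of_int (k^2 * (k^2 - 1)) :: 'k) \<noteq> 0"
    and phi_nonneg: "\<forall>x y. 0 \<le> \<phi> x y"
    and lim1: "\<forall>x y. (\<lambda>n. (1 / v ((2::'k) ^ n)) *
                 max (\<phi> (gmul (2 ^ (n + 1)) x) (gmul (2 ^ (n + 1)) y))
                     (v (8::'k) * \<phi> (gmul (2 ^ n) x) (gmul (2 ^ n) y))) \<longlonglongrightarrow> 0"
    and lim2: "\<forall>x. (\<lambda>n. (1 / v ((2::'k) ^ n * of_int (k^2 * (k^2 - 1)))) *
                 Phi v k \<phi> (gmul (2 ^ (n - 1)) x)) \<longlonglongrightarrow> 0"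
    and conv: "\<forall>x. convergent (\<lambda>n. Max (Phi_term v k \<phi> x ` {..<n}))"
    and f_odd: "\<forall>x. f (- x) = - f x"
    and f_approx: "\<forall>x y. nrm (Dop smul k f x y) \<le> \<phi> x y"
begin

abbreviation kk :: 'k where "kk \<equiv> of_int (k^2 * (k^2 - 1))"

lemma val_kk_pos: "0 < v kk"
  using k_nonzero by (rule val_pos)

lemma f_0: "f 0 = 0"
  using f_odd double_eq_0_imp[of "f 0"] by (metis add.right_inverse minus_zero)

lemma Phi_nonneg: "0 \<le> Phi v k \<phi> u"
proof -
  have "\<phi> u u \<le> Phi v k \<phi> u"
    unfolding Phi_def by (rule Max_ge) auto
  then show ?thesis
    using phi_nonneg order_trans by blast
qed

lemma Phi_term_nonneg: "0 \<le> Phi_term v k \<phi> x i"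
  unfolding Phi_term_def using Phi_nonneg val_nonneg by simp

definition g :: "'g \<Rightarrow> 'x" where
  "g x = f (gmul 2 x) - smul 8 (f x)"

lemma g_double_eq: "g (gmul 2 u) - smul 2 (g u) = f (gmul 4 u) - smul 10 (f (gmul 2 u)) + smul 16 (f u)"
proof -
  have "gmul 2 (gmul 2 u) = gmul 4 u"
    by (simp add: gmul_mult[symmetric])
  then have "g (gmul 2 u) - smul 2 (g u) = f (gmul 4 u) - smul 8 (f (gmul 2 u)) - (smul 2 (f (gmul 2 u)) - smul 16 (f u))"
    by (simp add: g_def scale_right_diff_distrib)
  also have "\<dots> = f (gmul 4 u) - (smul 8 (f (gmul 2 u)) + smul 2 (f (gmul 2 u))) + smul 16 (f u)"
    by (simp add: algebra_simps)
  also have "\<dots> = f (gmul 4 u) - smul 10 (f (gmul 2 u)) + smul 16 (f u)"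
    by (simp add: scale_left_distrib[symmetric])
  finally show ?thesis .
qed

lemma Phi_ge:
  "\<phi> u u \<le> Phi v k \<phi> u" "\<phi> u (gmul 2 u) \<le> Phi v k \<phi> u" "\<phi> u (gmul 3 u) \<le> Phi v k \<phi> u"
  "v (of_int (k^2)) * \<phi> (gmul 2 u) u \<le> Phi v k \<phi> u"
  "v (of_int (k^2)) * \<phi> (gmul 2 u) (gmul 2 u) \<le> Phi v k \<phi> u"
  "\<phi> (gmul (k + 1) u) u \<le> Phi v k \<phi> u" "\<phi> (gmul (k - 1) u) u \<le> Phi v k \<phi> u"
  "\<phi> (gmul (2 * k + 1) u) u \<le> Phi v k \<phi> u" "\<phi> (gmul (2 * k - 1) u) u \<le> Phi v k \<phi> u"
  unfolding Phi_def by (rule Max_ge; simp)+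

lemma nrm_scale_Dop_le: "v c \<le> w \<Longrightarrow> nrm (smul c (Dop smul k f p q)) \<le> w * \<phi> p q"
  unfolding nrm_scale using f_approx val_nonneg[of c] by (intro mult_mono nrm_nonneg) auto

lemma nrm_scale_Dop_le_phi: "v c \<le> 1 \<Longrightarrow> nrm (smul c (Dop smul k f p q)) \<le> \<phi> p q"
  using nrm_scale_Dop_le[of c 1] by simp

lemma g_double_estimate: "nrm (g (gmul 2 u) - smul 2 (g u)) \<le> Phi v k \<phi> u / v kk"
proof -
  have pts: "kpoint k u 0 (1, 0, 0, 0) = u" "kpoint k u 0 (2, 0, 0, 0) = gmul 2 u"
    "kpoint k u 0 (3, 0, 0, 0) = gmul 3 u" "kpoint k u 0 (4, 0, 0, 0) = gmul 4 u"
    "kpoint k u 0 (1, 1, 0, 0) = gmul (k + 1) u" "kpoint k u 0 (-1, 1, 0, 0) = gmul (k - 1) u"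
    "kpoint k u 0 (1, 2, 0, 0) = gmul (2 * k + 1) u" "kpoint k u 0 (-1, 2, 0, 0) = gmul (2 * k - 1) u"
    by (simp_all add: kpoint_def algebra_simps)
  note identity = Dop_identity_doubling[where A = f and k = k and u = u, OF f_odd[rule_format] f_0, unfolded pts]
  have val_2k2: "v (of_int (2 * k^2)) \<le> v (of_int (k^2))"
    using val_2_le_1 val_nonneg[of 2] val_nonneg[of "of_int (k^2)"]
    by (simp add: val_mult mult_left_le_one_le del: of_int_power)
  have "nrm (smul kk (g (gmul 2 u) - smul 2 (g u))) \<le> Phi v k \<phi> u"
    unfolding g_double_eq identity
    by (intro nrm_add_le nrm_diff_le order_trans[OF nrm_scale_Dop_le_phi[OF val_of_int_le_1] Phi_ge(1)]
        order_trans[OF nrm_scale_Dop_le_phi[OF val_of_int_le_1] Phi_ge(2)]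
        order_trans[OF nrm_scale_Dop_le[OF val_2k2] Phi_ge(4)]
        order_trans[OF nrm_scale_Dop_le[OF order_refl] Phi_ge(5)]
        order_trans[OF nrm_scale_Dop_le_phi[OF val_numeral_le_1] Phi_ge(6)]
        order_trans[OF nrm_scale_Dop_le_phi[OF val_numeral_le_1] Phi_ge(7)]
        order_trans[OF f_approx[rule_format] Phi_ge(3)]
        order_trans[OF f_approx[rule_format] Phi_ge(8)]
        order_trans[OF f_approx[rule_format] Phi_ge(9)])
  then have "v kk * nrm (g (gmul 2 u) - smul 2 (g u)) \<le> Phi v k \<phi> u"
    by (simp only: nrm_scale)
  then show ?thesis
    using val_kk_pos by (simp add: pos_le_divide_eq mult.commute)
qed

definition A_seq :: "nat \<Rightarrow> 'g \<Rightarrow> 'x" where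
  "A_seq n x = smul (inverse ((2::'k) ^ n)) (g (gmul (2 ^ n) x))"

lemma A_seq_0: "A_seq 0 x = g x"
  by (simp add: A_seq_def)

lemma nrm_A_seq_Suc_diff_le: "nrm (A_seq (Suc n) x - A_seq n x) \<le> Phi_term v k \<phi> x (Suc n) / v kk"
proof -
  let ?u = "gmul (2 ^ n) x"
  have "gmul (2 ^ Suc n) x = gmul 2 ?u"
    by (simp add: gmul_mult[symmetric])
  moreover have "inverse ((2::'k) ^ n) = inverse (2 ^ Suc n) * 2"
    using two_nonzero by (simp add: field_simps)
  ultimately have diff: "A_seq (Suc n) x - A_seq n x = smul (inverse (2 ^ Suc n)) (g (gmul 2 ?u) - smul 2 (g ?u))"
    by (simp add: A_seq_def scale_right_diff_distrib)
  have "nrm (A_seq (Suc n) x - A_seq n x) = inverse (v (2 ^ Suc n)) * nrm (g (gmul 2 ?u) - smul 2 (g ?u))"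
    unfolding diff nrm_scale val_inverse ..
  also have "\<dots> \<le> inverse (v (2 ^ Suc n)) * (Phi v k \<phi> ?u / v kk)"
    by (rule mult_left_mono[OF g_double_estimate]) (simp add: val_nonneg)
  also have "\<dots> = Phi_term v k \<phi> x (Suc n) / v kk"
    by (simp add: Phi_term_def divide_inverse mult_ac)
  finally show ?thesis .
qed

lemma tendsto_nrm_A_seq_Suc_diff: "(\<lambda>n. nrm (A_seq (Suc n) x - A_seq n x)) \<longlonglongrightarrow> 0"
proof (rule tendsto_sandwich[OF _ _ tendsto_const])
  have "(\<lambda>n. (1 / v ((2::'k) ^ Suc n * kk)) * Phi v k \<phi> (gmul (2 ^ (Suc n - 1)) x)) \<longlonglongrightarrow> 0"
    using LIMSEQ_Suc[OF lim2[rule_format, of x]] .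
  then show "(\<lambda>n. Phi_term v k \<phi> x (Suc n) / v kk) \<longlonglongrightarrow> 0"
    by (simp add: Phi_term_def val_mult)
  show "\<forall>\<^sub>F n in sequentially. nrm (A_seq (Suc n) x - A_seq n x) \<le> Phi_term v k \<phi> x (Suc n) / v kk"
    by (intro always_eventually allI nrm_A_seq_Suc_diff_le)
qed (simp add: nrm_nonneg)

definition A :: "'g \<Rightarrow> 'x" where
  "A x = (SOME l. (\<lambda>n. nrm (A_seq n x - l)) \<longlonglongrightarrow> 0)"

lemma A_seq_tendsto: "(\<lambda>n. nrm (A_seq n x - A x)) \<longlonglongrightarrow> 0"
  unfolding A_def
  by (rule someI_ex[OF convergent_if_diff_Suc_tendsto_0[OF tendsto_nrm_A_seq_Suc_diff]])

lemma nrm_A_seq_diff_g_le: "nrm (A_seq n x - g x) \<le> Max (Phi_term v k \<phi> x ` {..n}) / v kk"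
proof (induction n)
  case 0
  then show ?case
    using Phi_term_nonneg[of x 0] val_kk_pos by (simp add: A_seq_0)
next
  case (Suc n)
  have "Max (Phi_term v k \<phi> x ` {..n}) \<le> Max (Phi_term v k \<phi> x ` {..Suc n})"
    by (rule Max_mono) auto
  then have "nrm (A_seq n x - g x) \<le> Max (Phi_term v k \<phi> x ` {..Suc n}) / v kk"
    using Suc.IH val_kk_pos by (meson divide_right_mono less_imp_le order_trans)
  moreover have "nrm (A_seq (Suc n) x - A_seq n x) \<le> Max (Phi_term v k \<phi> x ` {..Suc n}) / v kk"
  proof -
    have "Phi_term v k \<phi> x (Suc n) \<le> Max (Phi_term v k \<phi> x ` {..Suc n})"
      by (rule Max_ge) auto
    then show ?thesis
      using nrm_A_seq_Suc_diff_le[of n x] val_kk_pos by (meson divide_right_mono less_imp_le order_trans)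
  qed
  ultimately show ?case
    using nrm_add_le[of "A_seq (Suc n) x - A_seq n x" _ "A_seq n x - g x"] by simp
qed

lemma Max_Phi_term_tendsto:
  "(\<lambda>n. Max (Phi_term v k \<phi> x ` {..n})) \<longlonglongrightarrow> lim (\<lambda>n. Max (Phi_term v k \<phi> x ` {..<n}))"
  using LIMSEQ_Suc[OF conv[rule_format, of x, unfolded convergent_LIMSEQ_iff]]
  by (simp add: lessThan_Suc_atMost)

lemma lim_Max_Phi_term_nonneg: "0 \<le> lim (\<lambda>n. Max (Phi_term v k \<phi> x ` {..<n}))"
proof (rule LIMSEQ_le_const[OF Max_Phi_term_tendsto])
  show "\<exists>N. \<forall>n\<ge>N. 0 \<le> Max (Phi_term v k \<phi> x ` {..n})"
  proof (intro exI allI impI)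
    fix n :: nat
    have "Phi_term v k \<phi> x 0 \<le> Max (Phi_term v k \<phi> x ` {..n})"
      by (rule Max_ge) auto
    then show "0 \<le> Max (Phi_term v k \<phi> x ` {..n})"
      using Phi_term_nonneg[of x 0] by linarith
  qed
qed

lemma g_A_estimate:
  "nrm (g x - A x) \<le> (1 / v (of_int (2 * k^2 * (k^2 - 1)))) * lim (\<lambda>n. Max (Phi_term v k \<phi> x ` {..<n}))"
proof -
  define L where "L = lim (\<lambda>n. Max (Phi_term v k \<phi> x ` {..<n}))"
  have L_nonneg: "0 \<le> L"
    unfolding L_def by (rule lim_Max_Phi_term_nonneg)
  have "nrm (g x - A x) \<le> L / v kk"
  proof (rule le_of_le_max_tendsto)
    show "nrm (g x - A x) \<le> max (nrm (A_seq n x - A x)) (Max (Phi_term v k \<phi> x ` {..n}) / v kk)" for n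
      using nrm_triangle_max[of "g x" "A x" "A_seq n x"] nrm_A_seq_diff_g_le[of n x]
        nrm_minus_commute[of "g x" "A_seq n x"] by linarith
    show "(\<lambda>n. Max (Phi_term v k \<phi> x ` {..n}) / v kk) \<longlonglongrightarrow> L / v kk"
      unfolding L_def
      by (intro tendsto_divide Max_Phi_term_tendsto tendsto_const dual_order.strict_implies_not_eq[OF val_kk_pos])
  qed (use A_seq_tendsto L_nonneg val_kk_pos in simp_all)
  also have "\<dots> \<le> L / v (2 * kk)"
  proof (rule divide_left_mono[OF _ L_nonneg])
    show "v (2 * kk) \<le> v kk"
      using val_2_le_1 val_nonneg[of 2] val_nonneg[of kk] by (simp only: val_mult mult_left_le_one_le)
    show "0 < v kk * v (2 * kk)"
      using val_kk_pos val_2_pos by (simp only: val_mult mult_pos_pos)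
  qed
  also have "(2 * kk) = (of_int (2 * k^2 * (k^2 - 1)) :: 'k)"
    by (simp add: mult.assoc)
  finally show ?thesis
    by (simp add: L_def)
qed

lemma g_odd: "g (- x) = - g x"
  using f_odd by (simp add: g_def gmul_minus_right scale_right_diff_distrib[symmetric])

lemma A_odd: "A (- x) = - A x"
proof (rule tendsto_nrm_unique[OF A_seq_tendsto])
  have "nrm (A_seq n (- x) - - A x) = nrm (A_seq n x - A x)" for n
    using nrm_minus[of "A_seq n x - A x"] by (simp add: A_seq_def gmul_minus_right g_odd)
  then show "(\<lambda>n. nrm (A_seq n (- x) - - A x)) \<longlonglongrightarrow> 0"
    using A_seq_tendsto[of x] by simp
qed

lemma A_0: "A 0 = 0"
  using A_odd[of 0] double_eq_0_imp[of "A 0"] by (metis add.right_inverse minus_zero)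

lemma A_double: "A (gmul 2 x) = smul 2 (A x)"
proof (rule tendsto_nrm_unique[OF A_seq_tendsto])
  have "A_seq n (gmul 2 x) = smul 2 (A_seq (Suc n) x)" for n
  proof -
    have "gmul (2 ^ n) (gmul 2 x) = gmul (2 ^ Suc n) x"
      by (simp add: gmul_mult[symmetric] mult.commute)
    moreover have "inverse ((2::'k) ^ n) = 2 * inverse (2 ^ Suc n)"
      using two_nonzero by (simp add: field_simps)
    ultimately show ?thesis
      by (simp add: A_seq_def)
  qed
  then have "nrm (A_seq n (gmul 2 x) - smul 2 (A x)) = v 2 * nrm (A_seq (Suc n) x - A x)" for n
    by (simp add: scale_right_diff_distrib[symmetric] nrm_scale)
  moreover have "(\<lambda>n. v 2 * nrm (A_seq (Suc n) x - A x)) \<longlonglongrightarrow> v 2 * 0"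
    by (intro tendsto_mult tendsto_const LIMSEQ_Suc[OF A_seq_tendsto])
  ultimately show "(\<lambda>n. nrm (A_seq n (gmul 2 x) - smul 2 (A x))) \<longlonglongrightarrow> 0"
    by simp
qed

lemma Dop_g: "Dop smul k g p q = Dop smul k f (gmul 2 p) (gmul 2 q) - smul 8 (Dop smul k f p q)"
proof -
  have "g = (\<lambda>z. f (gmul 2 z) - smul 8 (f z))"
    by (simp add: g_def fun_eq_iff)
  then show ?thesis
    by (simp add: Dop_diff[symmetric] Dop_comp_gmul Dop_scale)
qed

lemma nrm_Dop_A_seq_le: "nrm (Dop smul k (A_seq n) p q) \<le> (1 / v ((2::'k) ^ n)) *
    max (\<phi> (gmul (2 ^ (n + 1)) p) (gmul (2 ^ (n + 1)) q)) (v (8::'k) * \<phi> (gmul (2 ^ n) p) (gmul (2 ^ n) q))"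
proof -
  let ?p = "gmul (2 ^ n) p" and ?q = "gmul (2 ^ n) q"
  have "A_seq n = (\<lambda>z. smul (inverse ((2::'k) ^ n)) (g (gmul (2 ^ n) z)))"
    by (simp add: A_seq_def fun_eq_iff)
  then have eq: "nrm (Dop smul k (A_seq n) p q) = inverse (v (2 ^ n)) * nrm (Dop smul k g ?p ?q)"
    by (simp add: Dop_scale Dop_comp_gmul nrm_scale val_inverse)
  have pow: "gmul 2 (gmul (2 ^ n) z) = gmul (2 ^ (n + 1)) z" for z
    by (simp add: gmul_mult[symmetric])
  have "nrm (smul 8 (Dop smul k f ?p ?q)) \<le> v 8 * \<phi> ?p ?q"
    using f_approx val_nonneg by (simp add: nrm_scale mult_left_mono)
  then have "nrm (Dop smul k g ?p ?q) \<le> max (\<phi> (gmul 2 ?p) (gmul 2 ?q)) (v 8 * \<phi> ?p ?q)"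
    unfolding Dop_g using f_approx by (intro nrm_diff_le) (auto intro: le_max_iff_disj[THEN iffD2])
  then show ?thesis
    unfolding eq pow[symmetric] inverse_eq_divide[symmetric] by (rule mult_left_mono) (simp add: val_nonneg)
qed

lemma Dop_A: "Dop smul k A p q = 0"
proof -
  have "nrm (Dop smul k A p q) \<le> 0"
  proof (rule le_of_le_max_tendsto)
    show "nrm (Dop smul k A p q) \<le> max (nrm (Dop smul k (A_seq n) p q - Dop smul k A p q)) (nrm (Dop smul k (A_seq n) p q))" for n
      using nrm_triangle_max[of "Dop smul k A p q" 0 "Dop smul k (A_seq n) p q"]
        nrm_minus_commute[of "Dop smul k A p q"] by simp
    show "(\<lambda>n. nrm (Dop smul k (A_seq n) p q - Dop smul k A p q)) \<longlonglongrightarrow> 0"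
      by (rule tendsto_nrm_Dop[OF A_seq_tendsto])
    show "(\<lambda>n. nrm (Dop smul k (A_seq n) p q)) \<longlonglongrightarrow> 0"
      by (rule tendsto_sandwich[OF _ _ tendsto_const lim1[rule_format, of p q]])
        (simp add: nrm_nonneg, intro always_eventually allI nrm_Dop_A_seq_le)
  qed simp
  then show ?thesis
    using nrm_nonneg[of "Dop smul k A p q"] by simp
qed

(* 3 divides k^2 (k^2 - 1), so 3 is nonzero in K because k^2 (k^2 - 1) is. *)
lemma six_kk_nonzero: "(of_int (6 * k^2 * (k^2 - 1)) :: 'k) \<noteq> 0"
proof -
  have "(3::int) dvd (k - 1) * k * (k + 1)"
    by (induction k rule: int_induct[where k = 0]) (auto simp: algebra_simps dvd_add_right_iff)
  then obtain m where m: "(k - 1) * k * (k + 1) = 3 * m"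
    by (auto simp: dvd_def)
  have "k^2 * (k^2 - 1) = 3 * (k * m)"
    using m by algebra
  then have "(3::'k) \<noteq> 0"
    using k_nonzero by (metis mult_zero_left of_int_mult of_int_numeral)
  moreover have "(of_int (6 * k^2 * (k^2 - 1)) :: 'k) = 2 * (3 * kk)"
    by (simp add: mult.assoc)
  ultimately show ?thesis
    using two_nonzero k_nonzero by (metis mult_eq_0_iff)
qed

lemma A_jensen: "A (x + y) + A (x - y) = smul 2 (A x)"
proof -
  have doubling: "A (kpoint k x y (a2, a2', b2, b2')) - smul 2 (A (kpoint k x y (a, a', b, b'))) = 0"
    if "a2 = 2 * a" "a2' = 2 * a'" "b2 = 2 * b" "b2' = 2 * b'" for a a' b b' a2 a2' b2 b2'
  proof -
    have "kpoint k x y (a2, a2', b2, b2') = gmul 2 (kpoint k x y (a, a', b, b'))"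
      using that by (simp add: kpoint_def gmul_add_right gmul_mult[symmetric] algebra_simps)
    then show ?thesis
      by (simp add: A_double)
  qed
  have pts: "kpoint k x y (1, 0, 1, 0) = x + y" "kpoint k x y (1, 0, -1, 0) = x - y" "kpoint k x y (1, 0, 0, 0) = x"
    by (simp_all add: kpoint_def gmul_minus)
  have "smul (of_int (6 * k^2 * (k^2 - 1)))
      (A (kpoint k x y (1, 0, 1, 0)) + A (kpoint k x y (1, 0, -1, 0)) - smul 2 (A (kpoint k x y (1, 0, 0, 0)))) = 0"
    using Dop_identity_jensen[where A = A and k = k and x = x and y = y, OF A_odd A_0]
    by (simp add: Dop_A doubling)
  then show ?thesis
    using six_kk_nonzero unfolding pts by simp
qed

lemma additive_A: "additive_map A"
  unfolding additive_map_def
proof (intro allI)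
  fix x y
  have "A (y - x) = - A (x - y)"
    using A_odd[of "x - y"] by simp
  then have "(A (x + y) - A x - A y) + (A (x + y) - A x - A y) = 0"
    using A_jensen[of x y] A_jensen[of y x] by (simp add: algebra_simps scale_two)
  then have "A (x + y) - A x - A y = 0"
    by (rule double_eq_0_imp)
  then show "A (x + y) = A x + A y"
    by (simp only: eq_iff_diff_eq_0[of "A (x + y)"] diff_diff_eq)
qed

(* For i = 0 the truncated exponent i - 1 = 0 gives Phi(2^n x) rather than Phi(2^(n-1) x);
   it is still dominated by the term n + 1 for x because |2| <= 1. *)
lemma Phi_term_gmul_pow2_le:
  "Phi_term v k \<phi> (gmul (2 ^ n) x) i \<le> v ((2::'k) ^ n) * Phi_term v k \<phi> x (if i = 0 then n + 1 else i + n)"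
proof (cases i)
  case 0
  have "Phi v k \<phi> (gmul (2 ^ n) x) \<le> Phi v k \<phi> (gmul (2 ^ n) x) / v 2"
    using Phi_nonneg[of "gmul (2 ^ n) x"] val_2_pos val_2_le_1
    by (simp add: le_divide_eq mult_right_le_one_le)
  also have "\<dots> = v ((2::'k) ^ n) * Phi_term v k \<phi> x (n + 1)"
    using val_pow2_pos[of n] by (simp add: Phi_term_def val_mult field_simps)
  finally show ?thesis
    using 0 by (simp add: Phi_term_def)
next
  case (Suc j)
  have "gmul (2 ^ j) (gmul (2 ^ n) x) = gmul (2 ^ (j + n)) x"
    by (simp add: gmul_mult[symmetric] power_add)
  then show ?thesis
    using val_pow2_pos[of n] val_pow2_pos[of i] Suc two_nonzero
    by (simp add: Phi_term_def val_mult power_add field_simps)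
qed

lemma lim_Max_Phi_term_gmul_pow2_le:
  "lim (\<lambda>m. Max (Phi_term v k \<phi> (gmul (2 ^ n) x) ` {..<m}))
     \<le> v ((2::'k) ^ n) * lim (\<lambda>m. Max (Phi_term v k \<phi> x ` {n..<m + n}))"
proof (rule LIMSEQ_le)
  show "(\<lambda>m. Max (Phi_term v k \<phi> (gmul (2 ^ n) x) ` {..<m}))
      \<longlonglongrightarrow> lim (\<lambda>m. Max (Phi_term v k \<phi> (gmul (2 ^ n) x) ` {..<m}))"
    using conv by (simp add: convergent_LIMSEQ_iff)
  show "(\<lambda>m. v ((2::'k) ^ n) * Max (Phi_term v k \<phi> x ` {n..<m + n}))
      \<longlonglongrightarrow> v ((2::'k) ^ n) * lim (\<lambda>m. Max (Phi_term v k \<phi> x ` {n..<m + n}))"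
    using convergent_Max_window[OF conv[rule_format, of x], of n]
    by (intro tendsto_mult tendsto_const) (simp add: convergent_LIMSEQ_iff)
  show "\<exists>N. \<forall>m\<ge>N. Max (Phi_term v k \<phi> (gmul (2 ^ n) x) ` {..<m})
      \<le> v ((2::'k) ^ n) * Max (Phi_term v k \<phi> x ` {n..<m + n})"
  proof (intro exI allI impI)
    fix m :: nat
    assume m: "2 \<le> m"
    have "finite (Phi_term v k \<phi> (gmul (2 ^ n) x) ` {..<m})" "Phi_term v k \<phi> (gmul (2 ^ n) x) ` {..<m} \<noteq> {}"
      using m by (auto simp: lessThan_empty_iff)
    then show "Max (Phi_term v k \<phi> (gmul (2 ^ n) x) ` {..<m}) \<le> v ((2::'k) ^ n) * Max (Phi_term v k \<phi> x ` {n..<m + n})"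
    proof (rule Max_le_iff[THEN iffD2], intro ballI)
      fix t
      assume "t \<in> Phi_term v k \<phi> (gmul (2 ^ n) x) ` {..<m}"
      then obtain i where i: "i < m" "t = Phi_term v k \<phi> (gmul (2 ^ n) x) i"
        by auto
      let ?j = "if i = 0 then n + 1 else i + n"
      have "Phi_term v k \<phi> x ?j \<le> Max (Phi_term v k \<phi> x ` {n..<m + n})"
        using i m by (intro Max_ge) auto
      then have "v (2 ^ n) * Phi_term v k \<phi> x ?j \<le> v (2 ^ n) * Max (Phi_term v k \<phi> x ` {n..<m + n})"
        by (rule mult_left_mono) (rule val_nonneg)
      then show "t \<le> v ((2::'k) ^ n) * Max (Phi_term v k \<phi> x ` {n..<m + n})"
        using i Phi_term_gmul_pow2_le[of n x i] by linarith
    qed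
  qed
qed

lemma A_unique:
  assumes windows: "\<forall>x. (\<lambda>i. lim (\<lambda>n. Max (Phi_term v k \<phi> x ` {i..<n + i}))) \<longlonglongrightarrow> 0"
    and additive: "additive_map B"
    and estimate: "\<forall>x. nrm (f (gmul 2 x) - smul 8 (f x) - B x)
                 \<le> (1 / v (of_int (2 * k^2 * (k^2 - 1)))) * lim (\<lambda>n. Max (Phi_term v k \<phi> x ` {..<n}))"
  shows "B = A"
proof
  fix x
  define C where "C = 1 / v (of_int (2 * k^2 * (k^2 - 1)) :: 'k)"
  define T where "T i = lim (\<lambda>n. Max (Phi_term v k \<phi> x ` {i..<n + i}))" for i
  have C_nonneg: "0 \<le> C"
    using val_nonneg by (simp add: C_def)
  have pow2: "F (gmul (2 ^ n) z) = smul (2 ^ n) (F z)" if "additive_map F" for F :: "'g \<Rightarrow> 'x" and n z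
    using additive_map_gmul[OF that] scale_of_int[of "2 ^ n"] by simp
  have "nrm (B x - A x) \<le> C * T n" for n
  proof -
    let ?z = "gmul (2 ^ n) x"
    have "nrm (B ?z - A ?z) \<le> max (nrm (B ?z - g ?z)) (nrm (g ?z - A ?z))"
      by (rule nrm_triangle_max)
    also have "\<dots> \<le> C * lim (\<lambda>m. Max (Phi_term v k \<phi> ?z ` {..<m}))"
      using estimate g_A_estimate[of ?z] nrm_minus_commute[of "B ?z"] by (simp add: C_def g_def)
    also have "\<dots> \<le> C * (v (2 ^ n) * T n)"
      using lim_Max_Phi_term_gmul_pow2_le[of n x] C_nonneg by (simp add: T_def add.commute mult_left_mono)
    finally have "nrm (smul (2 ^ n) (B x - A x)) \<le> v (2 ^ n) * (C * T n)"
      using pow2[OF additive] pow2[OF additive_A] by (simp add: scale_right_diff_distrib mult_ac)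
    then show ?thesis
      using val_pow2_pos[of n] by (simp add: nrm_scale)
  qed
  moreover have "(\<lambda>n. C * T n) \<longlonglongrightarrow> C * 0"
    using windows by (intro tendsto_mult tendsto_const) (simp add: T_def)
  ultimately have "nrm (B x - A x) \<le> 0"
    by (intro LIMSEQ_le_const[of "\<lambda>n. C * T n"]) auto
  then show "B x = A x"
    using nrm_nonneg[of "B x - A x"] by simp
qed

end

theorem theorem2p2:
  fixes v :: "'k::field \<Rightarrow> real"
    and smul :: "'k \<Rightarrow> 'x::ab_group_add \<Rightarrow> 'x"
    and nrm :: "'x \<Rightarrow> real"
    and k :: int
    and \<phi> :: "'g::ab_group_add \<Rightarrow> 'g \<Rightarrow> real"
    and f :: "'g \<Rightarrow> 'x"
  assumes val: "nonarch_valuation v" and nontriv: "nontrivial_valuation v"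
    and vs: "vector_space smul"
    and nrm: "nonarch_norm v smul nrm"
    and compl: "norm_complete nrm"
    and k: "k \<noteq> 0" "k \<noteq> 1" "k \<noteq> -1"
    and two_nz: "(2::'k) \<noteq> 0"
    and k_nz: "(of_int (k^2 * (k^2 - 1)) :: 'k) \<noteq> 0"
    and phi_nonneg: "\<forall>x y. 0 \<le> \<phi> x y"
    and lim1: "\<forall>x y. (\<lambda>n. (1 / v ((2::'k) ^ n)) *
                 max (\<phi> (gmul (2 ^ (n + 1)) x) (gmul (2 ^ (n + 1)) y))
                     (v (8::'k) * \<phi> (gmul (2 ^ n) x) (gmul (2 ^ n) y))) \<longlonglongrightarrow> 0"
    and lim2: "\<forall>x. (\<lambda>n. (1 / v ((2::'k) ^ n * of_int (k^2 * (k^2 - 1)))) *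
                 Phi v k \<phi> (gmul (2 ^ (n - 1)) x)) \<longlonglongrightarrow> 0"
    and conv: "\<forall>x. convergent (\<lambda>n. Max (Phi_term v k \<phi> x ` {..<n}))"
    and odd: "\<forall>x. f (- x) = - f x"
    and ineq: "\<forall>x y. nrm (Dop smul k f x y) \<le> \<phi> x y"
  shows "\<exists>A. additive_map A \<and>
           (\<forall>x. nrm (f (gmul 2 x) - smul 8 (f x) - A x)
                 \<le> (1 / v (of_int (2 * k^2 * (k^2 - 1)))) *
                   lim (\<lambda>n. Max (Phi_term v k \<phi> x ` {..<n}))) \<and>
           ((\<forall>x. (\<lambda>i. lim (\<lambda>n. Max (Phi_term v k \<phi> x ` {i..<n + i}))) \<longlonglongrightarrow> 0) \<longrightarrow>
              (\<forall>A'. additive_map A' \<and>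
                 (\<forall>x. nrm (f (gmul 2 x) - smul 8 (f x) - A' x)
                       \<le> (1 / v (of_int (2 * k^2 * (k^2 - 1)))) *
                         lim (\<lambda>n. Max (Phi_term v k \<phi> x ` {..<n}))) \<longrightarrow> A' = A))"
proof -
  interpret additive_cubic_stability smul v nrm k \<phi> f
    unfolding additive_cubic_stability_def additive_cubic_stability_axioms_def
      nonarch_banach_def nonarch_banach_axioms_def
    using assms by blast
  show ?thesis
  proof (intro exI conjI allI impI)
    show "additive_map A"
      by (rule additive_A)
    show "nrm (f (gmul 2 x) - smul 8 (f x) - A x)
        \<le> (1 / v (of_int (2 * k^2 * (k^2 - 1)))) * lim (\<lambda>n. Max (Phi_term v k \<phi> x ` {..<n}))" for x
      using g_A_estimate[of x] unfolding g_def .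
    show "A' = A" if "\<forall>x. (\<lambda>i. lim (\<lambda>n. Max (Phi_term v k \<phi> x ` {i..<n + i}))) \<longlonglongrightarrow> 0"
      and "additive_map A' \<and> (\<forall>x. nrm (f (gmul 2 x) - smul 8 (f x) - A' x)
        \<le> (1 / v (of_int (2 * k^2 * (k^2 - 1)))) * lim (\<lambda>n. Max (Phi_term v k \<phi> x ` {..<n})))" for A'
      using that by (intro A_unique) auto
  qed
qed

end
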